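(* Consider the weighted age-of-job scheduling problem described below, in which the service (job-completion) time of every network $i\in\{1,\dots,N\}$ is geometric with success probability $q_i$. This scheduling problem is indexable: for every network $i$ and every user $j\in\mathcal{M}_i$, the passive set $\mathcal{P}_j^i(\bar\lambda_i)$ of the single-user problem is monotonically non-decreasing in the activation cost $\bar\lambda_i$ (i.e., $\bar\lambda_{i,1}\le\bar\lambda_{i,2}$ implies $\mathcal{P}_j^i(\bar\lambda_{i,1})\subseteq\mathcal{P}_j^i(\bar\lambda_{i,2})$), and $\mathcal{P}_j^i(\infty)=\mathcal{S}_j^i$.
   Context: Time-slotted system: a central server, $N$ task-specific machine networks, and user groups $\mathcal{M}_i$ ($i=1,\dots,N$). In each slot, user $j\in\mathcal{M}_i$ generates a job with probability $p_j^i>0$; the server keeps a unit-size buffer per (user, group) pair, and arrivals to a full buffer are dropped. Network $i$ can serve at most $\bar M_i$ jobs per slot and the server at most $\bar M$ jobs per slot in total; preemptive-resume service is allowed. The age of job $\Delta_j^i(t)$ is the time the current job of user $j\in\mathcal{M}_i$ has spent in the buffer up to time $t$ (0 if no job). The objective is to minimize the long-term average of $\sum_i\sum_j w_j^i\Delta_j^i(t)$ subject to the per-slot capacity constraints. Relaxing the constraints to time-average constraints with Lagrange multipliers $\lambda,\mu_i\ge0$ decouples the problem into single-user problems: minimize $\limsup_{T\to\infty}\frac1T\sum_{t=1}^T\mathbb{E}[w_j^i\Delta_j^i(t)+\bar\lambda_i c_j^i(t)]$, with $\bar\lambda_i=\lambda+\mu_i$ and $c_j^i(t)\in\{0,1\}$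 the action (1 = active/serve, 0 = passive). Network $i$ completes an in-service job at the end of each slot with probability $q_i$ (geometric service), so the state is $s_j^i=(\Delta_j^i,\bar\Delta_j^i)$ with $\bar\Delta_j^i=0$ if a job is present and $\bar\Delta_j^i=\infty$ if the buffer is empty (state $(0,\infty)$); $\mathcal{S}_j^i$ is the state space. Per-slot cost is $w_j^i\Delta_j^i+\bar\lambda_i c_j^i$; only the passive action is allowed in the empty state. Transitions: from $(0,\infty)$, stay w.p. $1-p_j^i$ or go to $(0,0)$ w.p. $p_j^i$; passive with a job: $(\Delta,0)\to(\Delta+1,0)$; active with a job: to $(0,0)$ w.p. $q_ip_j^i$, to $(0,\infty)$ w.p. $q_i(1-p_j^i)$, to $(\Delta+1,0)$ w.p. $1-q_i$. With $\bar V_j^i(s;c,\bar\lambda_i)$ the cost of action $c$ in state $s$ plus the expected relative value (average-cost optimality) of the next state, the passive set is $\mathcal{P}_j^i(\bar\lambda_i)=\{s\in\mathcal{S}_j^i:\bar\Delta_j^i=0,\ \bar V_j^i(s;0,\bar\lambda_i)\le\bar V_j^i(s;1,\bar\lambda_i)\}\cup\{s\in\mathcal{S}_j^i:\bar\Delta_j^i=\infty\}$. A user is indexable if its passive set is monotone in $\bar\lambda_i$ with $\mathcal{P}_j^i(\infty)=\mathcal{S}_j^i$; the scheduling problem is indexable if every user of every network is indexable. *)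

theory Defs
  imports "HOL-Analysis.Analysis" "HOL-Library.Extended_Nonnegative_Real"
begin

text \<open>Single-user problem of user j in network i.
  State (Delta, Deltabar): Empty = (0, infinity) (empty buffer),
  Job d = (d, 0) (a job of age d is present).  Action c :: nat, 1 = active, 0 = passive.\<close>

datatype st = Empty | Job nat

fun age :: "st \<Rightarrow> nat" where
  "age Empty = 0"
| "age (Job d) = d"

definition actions :: "st \<Rightarrow> nat set" where
  "actions s = (if s = Empty then {0} else {0, 1})"

definition cost :: "real \<Rightarrow> real \<Rightarrow> st \<Rightarrow> nat \<Rightarrow> real" where
  "cost w lam s c = w * real (age s) + lam * real c"

text \<open>Transition kernel as a list of (probability, next state) pairs
  (arrival probability p, geometric service with success probability q).\<close>
fun kernel :: "real \<Rightarrow> real \<Rightarrow> st \<Rightarrow> nat \<Rightarrow> (real \<times> st) list" where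
  "kernel p q Empty c = [(1 - p, Empty), (p, Job 0)]"
| "kernel p q (Job d) c =
     (if c = 0 then [(1, Job (Suc d))]
      else [(q * p, Job 0), (q * (1 - p), Empty), (1 - q, Job (Suc d))])"

definition expect :: "real \<Rightarrow> real \<Rightarrow> st \<Rightarrow> nat \<Rightarrow> (st \<Rightarrow> real) \<Rightarrow> real" where
  "expect p q s c f = (\<Sum>(\<pi>, s') \<leftarrow> kernel p q s c. \<pi> * f s')"

definition expect_enn :: "real \<Rightarrow> real \<Rightarrow> st \<Rightarrow> nat \<Rightarrow> (st \<Rightarrow> ennreal) \<Rightarrow> ennreal" where
  "expect_enn p q s c f = (\<Sum>(\<pi>, s') \<leftarrow> kernel p q s c. ennreal \<pi> * f s')"

text \<open>Discounted Bellman operator (discount factor beta) and the optimal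
  beta-discounted cost, which for nonnegative costs is the least fixed point.\<close>
definition bellman :: "real \<Rightarrow> real \<Rightarrow> real \<Rightarrow> real \<Rightarrow> real \<Rightarrow> (st \<Rightarrow> ennreal) \<Rightarrow> st \<Rightarrow> ennreal" where
  "bellman p q w lam \<beta> V s =
     (let Q = (\<lambda>c. ennreal (cost w lam s c) + ennreal \<beta> * expect_enn p q s c V)
      in if s = Empty then Q 0 else min (Q 0) (Q 1))"

definition disc_value :: "real \<Rightarrow> real \<Rightarrow> real \<Rightarrow> real \<Rightarrow> real \<Rightarrow> st \<Rightarrow> ennreal" where
  "disc_value p q w lam \<beta> = lfp (bellman p q w lam \<beta>)"

text \<open>Relative value function of the average-cost problem (vanishing discount):
  h(s) = lim_{beta -> 1-} (V_beta(s) - V_beta(Empty)).\<close>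
definition rel_value :: "real \<Rightarrow> real \<Rightarrow> real \<Rightarrow> real \<Rightarrow> st \<Rightarrow> real" where
  "rel_value p q w lam s =
     Lim (at_left 1) (\<lambda>\<beta>. enn2real (disc_value p q w lam \<beta> s)
                          - enn2real (disc_value p q w lam \<beta> Empty))"

definition Vbar :: "real \<Rightarrow> real \<Rightarrow> real \<Rightarrow> st \<Rightarrow> nat \<Rightarrow> real \<Rightarrow> real" where
  "Vbar p q w s c lam = cost w lam s c + expect p q s c (rel_value p q w lam)"

text \<open>Passive set P(lambdabar).  The state space S is UNIV :: st set.\<close>
definition passive_set :: "real \<Rightarrow> real \<Rightarrow> real \<Rightarrow> real \<Rightarrow> st set" where
  "passive_set p q w lam =
     {s. s \<noteq> Empty \<and> Vbar p q w s 0 lam \<le> Vbar p q w s 1 lam} \<union> {Empty}"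

text \<open>Indexability of a single user: monotone passive set, and P(infinity) = S,
  read as: every state is passive for some finite activation cost.\<close>
definition user_indexable :: "real \<Rightarrow> real \<Rightarrow> real \<Rightarrow> bool" where
  "user_indexable p q w \<longleftrightarrow>
     (\<forall>lam1 lam2. 0 \<le> lam1 \<longrightarrow> lam1 \<le> lam2 \<longrightarrow> passive_set p q w lam1 \<subseteq> passive_set p q w lam2)
     \<and> (\<Union>lam\<in>{0..}. passive_set p q w lam) = (UNIV :: st set)"

definition problem_indexable ::
  "nat \<Rightarrow> (nat \<Rightarrow> 'u set) \<Rightarrow> (nat \<Rightarrow> 'u \<Rightarrow> real) \<Rightarrow> (nat \<Rightarrow> real) \<Rightarrow> (nat \<Rightarrow> 'u \<Rightarrow> real) \<Rightarrow> bool" where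
  "problem_indexable N M p q w \<longleftrightarrow>
     (\<forall>i\<in>{1..N}. \<forall>j\<in>M i. user_indexable (p i j) (q i) (w i j))"

end

theory Submission imports Defs begin

text \<open>For a discount factor \<open>b < 1\<close> the optimal discounted cost, the least fixed point of the
  Bellman operator, is non-decreasing in the age of the job; hence it is the value of a threshold
  policy that serves a job iff its age is at least \<open>T\<close>.  That value has a closed form whose only
  implicit ingredient is the gain \<open>g\<^sub>b(T)\<close> of the threshold, and the optimal threshold minimises
  \<open>g\<^sub>b\<close>.  As \<open>b \<longrightarrow> 1\<close> the optimal thresholds stay in a finite set and \<open>g\<^sub>b(T)\<close> is continuous in
  \<open>b\<close>, so the relative value function is the explicit relative value of a threshold minimising
  the average cost \<open>g\<^sub>1\<close>.  Comparing the two actions, a job of age \<open>d\<close> is then passive iff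
  \<open>w (d + 1/q) \<le> min\<^sub>T g\<^sub>1(T)\<close>, and the right-hand side is non-decreasing and unbounded in the
  activation cost.\<close>

section \<open>Threshold policies\<close>

definition stop_rate :: "real \<Rightarrow> real \<Rightarrow> real" where
  "stop_rate q b = 1 - b * (1 - q)"

text \<open>With a charge \<open>g\<close> subtracted in every slot, \<open>active_value\<close> is the discounted cost of serving
  a job of age \<open>d\<close> until it completes, and \<open>threshold_value T d\<close> that of the policy serving exactly
  the jobs of age at least \<open>T\<close>; costs after the completion are not counted.  \<open>threshold_gain T\<close>
  is the charge for which these relative costs are consistent with fresh arrivals (for \<open>b = 1\<close> it
  is the average cost of the threshold policy), written as a ratio of the discounted cost and
  the discounted length of a cycle started by an arrival.\<close>

definition active_value :: "real \<Rightarrow> real \<Rightarrow> real \<Rightarrow> real \<Rightarrow> real \<Rightarrow> nat \<Rightarrow> real" where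
  "active_value q w lam b g d =
     (w * real d + lam - g) / stop_rate q b + w * (b * (1 - q)) / (stop_rate q b)\<^sup>2"

definition threshold_value :: "real \<Rightarrow> real \<Rightarrow> real \<Rightarrow> real \<Rightarrow> real \<Rightarrow> nat \<Rightarrow> nat \<Rightarrow> real" where
  "threshold_value q w lam b g T d =
     (if T \<le> d then active_value q w lam b g d
      else (\<Sum>k<T - d. b ^ k * (w * real (d + k) - g))
           + b ^ (T - d) * active_value q w lam b g T)"

definition threshold_cost :: "real \<Rightarrow> real \<Rightarrow> real \<Rightarrow> real \<Rightarrow> nat \<Rightarrow> real" where
  "threshold_cost q w lam b T =
     (\<Sum>k<T. b ^ k * (w * real k))
     + b ^ T * ((w * real T + lam) / stop_rate q b + w * (b * (1 - q)) / (stop_rate q b)\<^sup>2)"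

definition threshold_time :: "real \<Rightarrow> real \<Rightarrow> nat \<Rightarrow> real" where
  "threshold_time q b T = (\<Sum>k<T. b ^ k) + b ^ T / stop_rate q b"

definition threshold_gain :: "real \<Rightarrow> real \<Rightarrow> real \<Rightarrow> real \<Rightarrow> real \<Rightarrow> nat \<Rightarrow> real" where
  "threshold_gain p q w lam b T =
     p * threshold_cost q w lam b T / (1 - p + p * threshold_time q b T)"

definition threshold_disc_value :: "real \<Rightarrow> real \<Rightarrow> real \<Rightarrow> real \<Rightarrow> real \<Rightarrow> nat \<Rightarrow> st \<Rightarrow> real" where
  "threshold_disc_value p q w lam b T s =
     (case s of
       Empty \<Rightarrow> b * (threshold_gain p q w lam b T / (1 - b))
     | Job d \<Rightarrow> threshold_value q w lam b (threshold_gain p q w lam b T) T d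
                + threshold_gain p q w lam b T / (1 - b))"

definition threshold_policy :: "nat \<Rightarrow> st \<Rightarrow> nat" where
  "threshold_policy T s = (case s of Empty \<Rightarrow> 0 | Job d \<Rightarrow> if T \<le> d then 1 else 0)"

definition action_value :: "real \<Rightarrow> real \<Rightarrow> real \<Rightarrow> real \<Rightarrow> real \<Rightarrow> (st \<Rightarrow> real) \<Rightarrow> st \<Rightarrow> nat \<Rightarrow> real" where
  "action_value p q w lam b V s c = cost w lam s c + b * expect p q s c V"

definition real_bellman :: "real \<Rightarrow> real \<Rightarrow> real \<Rightarrow> real \<Rightarrow> real \<Rightarrow> (st \<Rightarrow> real) \<Rightarrow> st \<Rightarrow> real" where
  "real_bellman p q w lam b V s =
     (if s = Empty then action_value p q w lam b V s 0
      else min (action_value p q w lam b V s 0) (action_value p q w lam b V s 1))"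

lemma stop_rate_pos:
  assumes "0 < q" "0 \<le> b" "b \<le> 1"
  shows "0 < stop_rate q b"
proof -
  have "b * (1 - q) < 1"
  proof (cases "b = 0")
    case False
    then have "0 < b * q" using assms by simp
    then show ?thesis using assms by (simp add: algebra_simps)
  qed simp
  then show ?thesis unfolding stop_rate_def by simp
qed

lemma stop_rate_le_1: "q \<le> 1 \<Longrightarrow> 0 \<le> b \<Longrightarrow> stop_rate q b \<le> 1"
  unfolding stop_rate_def by simp

lemma stop_rate_ge:
  assumes "0 \<le> q" "q \<le> 1" "0 \<le> b" "b \<le> 1"
  shows "q \<le> stop_rate q b" "1 - b \<le> stop_rate q b"
proof -
  have "0 \<le> (1 - b) * (1 - q)" "b * q \<le> q" "0 \<le> b * q"
    using assms by (auto intro: mult_left_le_one_le)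
  then show "q \<le> stop_rate q b" "1 - b \<le> stop_rate q b"
    unfolding stop_rate_def by (simp_all add: algebra_simps)
qed

lemma threshold_value_below:
  "d \<le> T \<Longrightarrow> threshold_value q w lam b g T d =
     (\<Sum>k<T - d. b ^ k * (w * real (d + k) - g)) + b ^ (T - d) * active_value q w lam b g T"
  unfolding threshold_value_def by (cases "d = T") auto

lemma threshold_value_passive_step:
  assumes "d < T"
  shows "threshold_value q w lam b g T d = w * real d - g + b * threshold_value q w lam b g T (Suc d)"
proof -
  obtain m where m: "T - d = Suc m" "T - Suc d = m"
    using assms by (metis Suc_diff_Suc diff_Suc_Suc)
  have "threshold_value q w lam b g T d
      = (\<Sum>k<Suc m. b ^ k * (w * real (d + k) - g)) + b ^ Suc m * active_value q w lam b g T"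
    using threshold_value_below[of d T] assms m by simp
  also have "\<dots> = w * real d - g
      + b * ((\<Sum>k<m. b ^ k * (w * real (Suc d + k) - g)) + b ^ m * active_value q w lam b g T)"
    by (subst sum.lessThan_Suc_shift)
       (simp add: sum_distrib_left mult.assoc distrib_left del: sum.lessThan_Suc)
  also have "\<dots> = w * real d - g + b * threshold_value q w lam b g T (Suc d)"
    using threshold_value_below[of "Suc d" T] assms m by simp
  finally show ?thesis .
qed

lemma active_value_step:
  assumes "stop_rate q b \<noteq> 0"
  shows "active_value q w lam b g d = w * real d + lam - g + b * (1 - q) * active_value q w lam b g (Suc d)"
proof -
  define c where "c = stop_rate q b"
  have "c \<noteq> 0" using assms c_def by simp
  moreover have bq: "b * (1 - q) = 1 - c" unfolding c_def stop_rate_def by simp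
  ultimately show ?thesis
    unfolding active_value_def c_def[symmetric] bq by (simp add: field_simps power2_eq_square)
qed

lemma threshold_value_active_step:
  "stop_rate q b \<noteq> 0 \<Longrightarrow> T \<le> d \<Longrightarrow>
   threshold_value q w lam b g T d = w * real d + lam - g + b * (1 - q) * threshold_value q w lam b g T (Suc d)"
  using active_value_step[of q b w lam g d] unfolding threshold_value_def by simp

lemma threshold_value_0:
  "threshold_value q w lam b g T 0 = threshold_cost q w lam b T - g * threshold_time q b T"
proof -
  have "(\<Sum>k<T. b ^ k * (w * real k - g)) = (\<Sum>k<T. b ^ k * (w * real k)) - g * (\<Sum>k<T. b ^ k)"
    by (simp add: sum_subtractf sum_distrib_left right_diff_distrib mult.commute)
  then show ?thesis
    using threshold_value_below[of 0 T q w lam b g]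
    unfolding threshold_cost_def threshold_time_def active_value_def
    by (simp add: diff_divide_distrib algebra_simps)
qed

lemma threshold_time_pos: "0 < q \<Longrightarrow> 0 < b \<Longrightarrow> b \<le> 1 \<Longrightarrow> 0 < threshold_time q b T"
  unfolding threshold_time_def using stop_rate_pos[of q b]
  by (intro add_nonneg_pos sum_nonneg) auto

lemma gain_denom_pos:
  "0 < q \<Longrightarrow> 0 < b \<Longrightarrow> b \<le> 1 \<Longrightarrow> 0 < p \<Longrightarrow> p \<le> 1 \<Longrightarrow> 0 < 1 - p + p * threshold_time q b T"
  using threshold_time_pos[of q b T] by (simp add: add_nonneg_pos)

lemma threshold_gain_consistent:
  assumes "0 < q" "0 < b" "b \<le> 1" "0 < p" "p \<le> 1"
  shows "(1 - p) * threshold_gain p q w lam b T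
           = p * threshold_value q w lam b (threshold_gain p q w lam b T) T 0"
proof -
  define A where "A = threshold_cost q w lam b T"
  define D where "D = 1 - p + p * threshold_time q b T"
  have "0 < D" unfolding D_def by (rule gain_denom_pos[OF assms])
  then have "p * (A - p * A / D * threshold_time q b T) = (1 - p) * (p * A / D)"
    unfolding D_def by (simp add: field_simps)
  then show ?thesis
    unfolding threshold_value_0 threshold_gain_def A_def[symmetric] D_def[symmetric] by simp
qed

lemma expect_Empty: "expect p q Empty c V = (1 - p) * V Empty + p * V (Job 0)"
  by (simp add: expect_def)

lemma expect_Job_passive: "expect p q (Job d) 0 V = V (Job (Suc d))"
  by (simp add: expect_def)

lemma expect_Job_active:
  "c \<noteq> 0 \<Longrightarrow> expect p q (Job d) c V = q * p * V (Job 0) + q * (1 - p) * V Empty + (1 - q) * V (Job (Suc d))"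
  by (simp add: expect_def)

lemma expect_diff: "expect p q s c f - expect p q s c g = expect p q s c (\<lambda>x. f x - g x)"
  by (cases s; cases "c = 0") (auto simp: expect_Empty expect_Job_passive expect_Job_active algebra_simps)

lemma expect_nonneg:
  assumes "0 \<le> p" "p \<le> 1" "0 \<le> q" "q \<le> 1" "\<And>s. 0 \<le> V s"
  shows "0 \<le> expect p q s c V"
  using assms
  by (cases s; cases "c = 0")
     (auto simp: expect_Empty expect_Job_passive expect_Job_active intro!: add_nonneg_nonneg mult_nonneg_nonneg)

lemma expect_le:
  assumes "0 \<le> p" "p \<le> 1" "0 \<le> q" "q \<le> 1"
    and "\<And>s'. age s' \<le> Suc (age s) \<Longrightarrow> f s' \<le> M"
  shows "expect p q s c f \<le> M"
proof -
  have "expect p q s c (\<lambda>_. M) - expect p q s c f = expect p q s c (\<lambda>s'. M - f s')"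
    by (rule expect_diff)
  moreover have "expect p q s c (\<lambda>_. M) = M"
    by (cases s; cases "c = 0") (auto simp: expect_Empty expect_Job_passive expect_Job_active algebra_simps)
  moreover have "0 \<le> expect p q s c (\<lambda>s'. M - f s')"
    using assms
    by (cases s; cases "c = 0")
       (auto simp: expect_Empty expect_Job_passive expect_Job_active intro!: add_nonneg_nonneg mult_nonneg_nonneg)
  ultimately show ?thesis by linarith
qed

lemma action_value_Job_passive:
  "action_value p q w lam b V (Job d) 0 = w * real d + b * V (Job (Suc d))"
  by (simp add: action_value_def cost_def expect_Job_passive)

lemma action_value_Job_diff:
  "action_value p q w lam b V (Job d) 1 - action_value p q w lam b V (Job d) 0
     = lam + b * q * (p * V (Job 0) + (1 - p) * V Empty - V (Job (Suc d)))"
  by (simp add: action_value_def cost_def expect_Job_passive expect_Job_active algebra_simps)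

lemma threshold_disc_value_Empty:
  "threshold_disc_value p q w lam b T Empty = b * (threshold_gain p q w lam b T / (1 - b))"
  by (simp add: threshold_disc_value_def)

lemma threshold_disc_value_Job:
  "threshold_disc_value p q w lam b T (Job d)
     = threshold_value q w lam b (threshold_gain p q w lam b T) T d + threshold_gain p q w lam b T / (1 - b)"
  by (simp add: threshold_disc_value_def)

lemma threshold_disc_value_restart:
  assumes "0 < q" "0 < p" "p \<le> 1" "0 < b" "b < 1"
  shows "p * threshold_disc_value p q w lam b T (Job 0) + (1 - p) * threshold_disc_value p q w lam b T Empty
           = threshold_gain p q w lam b T / (1 - b)"
proof -
  define g where "g = threshold_gain p q w lam b T"
  define Z where "Z = g / (1 - b)"
  have "(1 - p) * g = p * threshold_value q w lam b g T 0"
    unfolding g_def using threshold_gain_consistent[of q b p w lam T] assms by simp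
  moreover have "g = (1 - b) * Z" unfolding Z_def using assms by simp
  ultimately have "p * threshold_value q w lam b g T 0 = (1 - p) * (1 - b) * Z" by simp
  then show ?thesis
    unfolding threshold_disc_value_Job threshold_disc_value_Empty g_def[symmetric] Z_def[symmetric]
    by (simp add: algebra_simps)
qed

lemma threshold_disc_value_policy_eq:
  assumes q: "0 < q" "q \<le> 1" and p: "0 < p" "p \<le> 1" and b: "0 < b" "b < 1"
  shows "threshold_disc_value p q w lam b T s
           = action_value p q w lam b (threshold_disc_value p q w lam b T) s (threshold_policy T s)"
proof -
  define V where "V = threshold_disc_value p q w lam b T"
  define g where "g = threshold_gain p q w lam b T"
  define u where "u = threshold_value q w lam b g T"
  define Z where "Z = g / (1 - b)"
  have restart: "p * V (Job 0) + (1 - p) * V Empty = Z"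
    unfolding V_def g_def Z_def using threshold_disc_value_restart assms by simp
  have VJ: "V (Job d) = u d + Z" for d
    unfolding V_def u_def g_def Z_def threshold_disc_value_Job ..
  have gZ: "g = (1 - b) * Z" unfolding Z_def using b by simp
  show ?thesis
  proof (cases s)
    case Empty
    have "action_value p q w lam b V Empty 0 = b * (p * V (Job 0) + (1 - p) * V Empty)"
      by (simp add: action_value_def cost_def expect_Empty algebra_simps)
    then show ?thesis
      unfolding Empty V_def[symmetric] restart
      by (simp add: V_def g_def Z_def threshold_policy_def threshold_disc_value_Empty)
  next
    case (Job d)
    show ?thesis
    proof (cases "T \<le> d")
      case True
      have "stop_rate q b \<noteq> 0" using stop_rate_pos[of q b] q b by simp
      then have "u d = w * real d + lam - g + b * (1 - q) * u (Suc d)"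
        unfolding u_def by (rule threshold_value_active_step[OF _ True])
      then have "V (Job d) = action_value p q w lam b V (Job d) 0
                   + (lam + b * q * (p * V (Job 0) + (1 - p) * V Empty - V (Job (Suc d))))"
        unfolding restart unfolding action_value_Job_passive VJ gZ by (simp add: algebra_simps)
      then show ?thesis
        using True action_value_Job_diff[of p q w lam b V d]
        unfolding Job V_def[symmetric] by (simp add: threshold_policy_def)
    next
      case False
      then have "u d = w * real d - g + b * u (Suc d)"
        unfolding u_def by (intro threshold_value_passive_step) simp
      then show ?thesis
        unfolding Job V_def[symmetric] action_value_Job_passive VJ gZ
        by (simp add: threshold_policy_def False action_value_Job_passive VJ algebra_simps)
    qed
  qed
qed

lemma threshold_cost_nonneg:
  assumes "0 < q" "q \<le> 1" "0 \<le> b" "b \<le> 1" "0 \<le> w" "0 \<le> lam"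
  shows "0 \<le> threshold_cost q w lam b T"
  unfolding threshold_cost_def using assms stop_rate_pos[of q b]
  by (intro add_nonneg_nonneg sum_nonneg mult_nonneg_nonneg divide_nonneg_pos) auto

lemma threshold_gain_nonneg:
  assumes "0 < q" "q \<le> 1" "0 < b" "b \<le> 1" "0 < p" "p \<le> 1" "0 \<le> w" "0 \<le> lam"
  shows "0 \<le> threshold_gain p q w lam b T"
  unfolding threshold_gain_def using assms gain_denom_pos[of q b p T] threshold_cost_nonneg[of q b w lam T]
  by (intro divide_nonneg_pos mult_nonneg_nonneg) auto

lemma threshold_disc_value_above:
  assumes "T \<le> d"
  shows "threshold_disc_value p q w lam b T (Job d)
           = w * real d / stop_rate q b + (lam - threshold_gain p q w lam b T) / stop_rate q b
             + w * (b * (1 - q)) / (stop_rate q b)\<^sup>2 + threshold_gain p q w lam b T / (1 - b)"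
  using assms unfolding threshold_disc_value_Job threshold_value_def active_value_def
  by (simp add: add_divide_distrib diff_divide_distrib)

lemma threshold_disc_value_nonneg:
  assumes q: "0 < q" "q \<le> 1" and p: "0 < p" "p \<le> 1" and b: "0 < b" "b < 1"
    and w: "0 \<le> w" and lam: "0 \<le> lam"
  shows "0 \<le> threshold_disc_value p q w lam b T s"
proof -
  define V where "V = threshold_disc_value p q w lam b T"
  define g where "g = threshold_gain p q w lam b T"
  have g0: "0 \<le> g" unfolding g_def using threshold_gain_nonneg[of q b p w lam T] assms by simp
  have c: "0 < stop_rate q b" "1 - b \<le> stop_rate q b" using stop_rate_pos stop_rate_ge assms by auto
  have above: "0 \<le> V (Job d)" if "T \<le> d" for d
  proof -
    have "g / stop_rate q b \<le> g / (1 - b)" using c g0 b by (intro divide_left_mono) auto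
    moreover have "0 \<le> w * real d / stop_rate q b" "0 \<le> lam / stop_rate q b"
      "0 \<le> w * (b * (1 - q)) / (stop_rate q b)\<^sup>2"
      using c w lam q b by simp_all
    ultimately show ?thesis
      unfolding V_def threshold_disc_value_above[OF that] g_def[symmetric] diff_divide_distrib by linarith
  qed
  have below: "0 \<le> V (Job d)" if "d \<le> T" for d
    using that
  proof (induction d rule: inc_induct)
    case (step d)
    have "V (Job d) = w * real d + b * V (Job (Suc d))"
      using threshold_disc_value_policy_eq[OF q p b, of w lam T "Job d"] step.hyps
      unfolding V_def by (simp add: threshold_policy_def action_value_Job_passive)
    then show ?case using step.IH w b by simp
  qed (use above in simp)
  have "0 \<le> V (Job d)" for d using above below by (cases "T \<le> d") auto
  moreover have "0 \<le> V Empty" unfolding V_def threshold_disc_value_Empty using g_def g0 b by simp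
  ultimately show ?thesis unfolding V_def by (cases s) auto
qed

lemma threshold_disc_value_linear_bound:
  assumes q: "0 < q" "q \<le> 1" and p: "0 < p" "p \<le> 1" and b: "0 < b" "b < 1"
    and w: "0 \<le> w" and lam: "0 \<le> lam"
  obtains C B where "0 \<le> C" "0 \<le> B" "\<And>s. threshold_disc_value p q w lam b T s \<le> C + B * real (age s)"
proof -
  define V where "V = threshold_disc_value p q w lam b T"
  define g where "g = threshold_gain p q w lam b T"
  define K where "K = (lam - g) / stop_rate q b + w * (b * (1 - q)) / (stop_rate q b)\<^sup>2 + g / (1 - b)"
  define C where "C = \<bar>K\<bar> + (\<Sum>d<T. V (Job d)) + V Empty"
  define B where "B = w / stop_rate q b"
  have V0: "0 \<le> V s" for s unfolding V_def using threshold_disc_value_nonneg assms by blast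
  have sum0: "0 \<le> (\<Sum>d<T. V (Job d))" using V0 by (simp add: sum_nonneg)
  have B0: "0 \<le> B" unfolding B_def using stop_rate_pos[of q b] w q b by simp
  have "V s \<le> C + B * real (age s)" for s
  proof (cases s)
    case Empty then show ?thesis unfolding C_def using sum0 by simp
  next
    case (Job d)
    show ?thesis
    proof (cases "T \<le> d")
      case True
      then have "V (Job d) = B * real d + K"
        unfolding V_def threshold_disc_value_above[OF True] B_def K_def g_def by simp
      then show ?thesis using Job sum0 V0[of Empty] unfolding C_def by simp
    next
      case False
      then have "V (Job d) \<le> (\<Sum>d<T. V (Job d))" using V0 by (intro member_le_sum) auto
      moreover have "0 \<le> B * real d" using B0 by simp
      ultimately show ?thesis using V0[of Empty] unfolding C_def Job by simp
    qed
  qed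
  moreover have "0 \<le> C" unfolding C_def using sum0 V0[of Empty] by simp
  ultimately show ?thesis using B0 that unfolding V_def by blast
qed

text \<open>Iterating the inequality \<open>n\<close> times bounds \<open>D\<close> by \<open>b\<^sup>n (C + B (age + n)) \<longlongrightarrow> 0\<close>; this is
  uniqueness for the policy evaluation equation.\<close>

lemma discounted_subsolution_zero:
  fixes D :: "st \<Rightarrow> real"
  assumes p: "0 \<le> p" "p \<le> 1" and q: "0 \<le> q" "q \<le> 1" and b: "0 \<le> b" "b < 1"
    and D0: "\<And>s. 0 \<le> D s" and B: "0 \<le> B"
    and growth: "\<And>s. D s \<le> C + B * real (age s)"
    and sub: "\<And>s. D s \<le> b * expect p q s (\<pi> s) D"
  shows "D s = 0"
proof -
  have iter: "D s \<le> b ^ n * (C + B * (real (age s) + real n))" for n s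
  proof (induction n arbitrary: s)
    case 0 then show ?case using growth by simp
  next
    case (Suc n)
    have "expect p q s (\<pi> s) D \<le> b ^ n * (C + B * (real (age s) + 1 + real n))"
    proof (rule expect_le[OF p q])
      fix s' assume "age s' \<le> Suc (age s)"
      then have "b ^ n * (C + B * (real (age s') + real n)) \<le> b ^ n * (C + B * (real (age s) + 1 + real n))"
        using B b by (intro mult_left_mono add_left_mono) auto
      then show "D s' \<le> b ^ n * (C + B * (real (age s) + 1 + real n))" using Suc.IH order_trans by blast
    qed
    then have "b * expect p q s (\<pi> s) D \<le> b * (b ^ n * (C + B * (real (age s) + 1 + real n)))"
      using b by (intro mult_left_mono) auto
    then show ?case using sub[of s] by (simp add: algebra_simps)
  qed
  have "(\<lambda>n. (C + B * real (age s)) * b ^ n + B * (real n * b ^ n)) \<longlonglongrightarrow> (C + B * real (age s)) * 0 + B * 0"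
    using b by (intro tendsto_intros LIMSEQ_power_zero powser_times_n_limit_0) auto
  then have "(\<lambda>n. b ^ n * (C + B * (real (age s) + real n))) \<longlonglongrightarrow> 0"
    by (simp add: algebra_simps)
  then have "D s \<le> 0" using LIMSEQ_le_const iter by blast
  then show ?thesis using D0[of s] by simp
qed

section \<open>The discounted problem\<close>

lemma expect_enn_ennreal:
  assumes "0 \<le> p" "p \<le> 1" "0 \<le> q" "q \<le> 1" "\<And>s. 0 \<le> V s"
  shows "expect_enn p q s c (\<lambda>s. ennreal (V s)) = ennreal (expect p q s c V)"
  using assms
  by (cases s; cases "c = 0")
     (auto simp: expect_Empty expect_Job_passive expect_Job_active expect_enn_def ennreal_plus ennreal_mult
           intro!: add_nonneg_nonneg mult_nonneg_nonneg)

lemma expect_enn_mono: "V \<le> W \<Longrightarrow> expect_enn p q s c V \<le> expect_enn p q s c W"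
  by (cases s; cases "c = 0") (auto simp: expect_enn_def le_fun_def intro!: add_mono mult_left_mono)

lemma cost_le_action_value:
  assumes "0 \<le> p" "p \<le> 1" "0 \<le> q" "q \<le> 1" "\<And>s. 0 \<le> V s" "0 \<le> b"
  shows "cost w lam s c \<le> action_value p q w lam b V s c"
  unfolding action_value_def using expect_nonneg[OF assms(1-5), of s c] assms(6) by simp

lemma action_value_nonneg:
  assumes "0 \<le> p" "p \<le> 1" "0 \<le> q" "q \<le> 1" "\<And>s. 0 \<le> V s" "0 \<le> w" "0 \<le> lam" "0 \<le> b"
  shows "0 \<le> action_value p q w lam b V s c"
  unfolding action_value_def cost_def using expect_nonneg[OF assms(1-5), of s c] assms(6-8)
  by (intro add_nonneg_nonneg mult_nonneg_nonneg) auto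

lemma bellman_ennreal:
  assumes "0 \<le> p" "p \<le> 1" "0 \<le> q" "q \<le> 1" "\<And>s. 0 \<le> V s" "0 \<le> w" "0 \<le> lam" "0 \<le> b"
  shows "bellman p q w lam b (\<lambda>s. ennreal (V s)) s = ennreal (real_bellman p q w lam b V s)"
proof -
  have e: "ennreal (cost w lam s c) + ennreal b * expect_enn p q s c (\<lambda>s. ennreal (V s))
          = ennreal (action_value p q w lam b V s c)" for c
    unfolding action_value_def expect_enn_ennreal[OF assms(1-5)]
    using expect_nonneg[OF assms(1-5)] assms by (simp add: cost_def ennreal_plus ennreal_mult)
  show ?thesis
    unfolding bellman_def Let_def real_bellman_def e
    using action_value_nonneg[of p q V w lam b, OF assms] by (simp add: min_ennreal)
qed

lemma real_bellman_nonneg: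
  assumes "0 \<le> p" "p \<le> 1" "0 \<le> q" "q \<le> 1" "\<And>s. 0 \<le> V s" "0 \<le> w" "0 \<le> lam" "0 \<le> b"
  shows "0 \<le> real_bellman p q w lam b V s"
  unfolding real_bellman_def using action_value_nonneg[of p q V w lam b, OF assms] by simp

lemma mono_bellman: "mono (bellman p q w lam b)"
proof (rule monoI, rule le_funI)
  fix V W :: "st \<Rightarrow> ennreal" and s assume "V \<le> W"
  then have Q: "ennreal (cost w lam s c) + ennreal b * expect_enn p q s c V
          \<le> ennreal (cost w lam s c) + ennreal b * expect_enn p q s c W" for c
    by (intro add_mono mult_left_mono expect_enn_mono) auto
  show "bellman p q w lam b V s \<le> bellman p q w lam b W s"
  proof (cases "s = Empty")
    case True
    show ?thesis unfolding bellman_def Let_def if_P[OF True] by (rule Q)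
  next
    case False
    show ?thesis unfolding bellman_def Let_def if_not_P[OF False] by (rule min.mono[OF Q Q])
  qed
qed

lemma disc_value_mono_age:
  assumes "0 \<le> w"
  shows "disc_value p q w lam b (Job d) \<le> disc_value p q w lam b (Job (Suc d))"
proof -
  have "\<forall>d. lfp (bellman p q w lam b) (Job d) \<le> lfp (bellman p q w lam b) (Job (Suc d))"
  proof (induction rule: lfp_ordinal_induct[OF mono_bellman])
    case (1 V)
    have Q: "ennreal (cost w lam (Job d) c) + ennreal b * expect_enn p q (Job d) c V
          \<le> ennreal (cost w lam (Job (Suc d)) c) + ennreal b * expect_enn p q (Job (Suc d)) c V" for d c
    proof (intro add_mono mult_left_mono)
      show "ennreal (cost w lam (Job d) c) \<le> ennreal (cost w lam (Job (Suc d)) c)"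
        unfolding cost_def using assms by (intro ennreal_leI) (simp add: mult_left_mono)
      show "expect_enn p q (Job d) c V \<le> expect_enn p q (Job (Suc d)) c V"
        using 1 by (cases "c = 0") (auto simp: expect_enn_def intro!: add_mono mult_left_mono)
    qed auto
    show ?case
    proof
      fix d
      show "bellman p q w lam b V (Job d) \<le> bellman p q w lam b V (Job (Suc d))"
        unfolding bellman_def Let_def using min.mono[OF Q[of d 0] Q[of d 1]] by simp
    qed
  next
    case (2 M)
    then show ?case unfolding Sup_apply by (blast intro: SUP_mono)
  qed
  then show ?thesis unfolding disc_value_def by blast
qed

lemma disc_value_le_threshold:
  assumes q: "0 < q" "q \<le> 1" and p: "0 < p" "p \<le> 1" and b: "0 < b" "b < 1"
    and w: "0 \<le> w" and lam: "0 \<le> lam"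
  shows "disc_value p q w lam b s \<le> ennreal (threshold_disc_value p q w lam b T s)"
proof -
  define V where "V = threshold_disc_value p q w lam b T"
  have V0: "0 \<le> V s" for s unfolding V_def using threshold_disc_value_nonneg assms by blast
  have "bellman p q w lam b (\<lambda>s. ennreal (V s)) \<le> (\<lambda>s. ennreal (V s))"
  proof (rule le_funI)
    fix s
    have "real_bellman p q w lam b V s \<le> action_value p q w lam b V s (threshold_policy T s)"
      unfolding real_bellman_def threshold_policy_def by (cases s) auto
    also have "\<dots> = V s" unfolding V_def by (rule threshold_disc_value_policy_eq[OF q p b, symmetric])
    finally show "bellman p q w lam b (\<lambda>s. ennreal (V s)) s \<le> ennreal (V s)"
      using bellman_ennreal[of p q V w lam b s] V0 assms by (simp add: ennreal_leI)
  qed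
  then show ?thesis unfolding disc_value_def V_def by (metis lfp_lowerbound le_fun_def)
qed

lemma disc_value_real_fixpoint:
  assumes q: "0 < q" "q \<le> 1" and p: "0 < p" "p \<le> 1" and b: "0 < b" "b < 1"
    and w: "0 \<le> w" and lam: "0 \<le> lam"
  obtains u where "disc_value p q w lam b = (\<lambda>s. ennreal (u s))" "\<And>s. 0 \<le> u s"
    "\<And>s. u s = real_bellman p q w lam b u s"
proof
  define u where "u s = enn2real (disc_value p q w lam b s)" for s
  show u0: "0 \<le> u s" for s unfolding u_def by simp
  have "disc_value p q w lam b s \<noteq> top" for s
    using disc_value_le_threshold[OF assms, of s 0] by (metis ennreal_neq_top neq_top_trans)
  then show U: "disc_value p q w lam b = (\<lambda>s. ennreal (u s))"
    unfolding u_def by (simp add: fun_eq_iff ennreal_enn2real_if)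
  fix s
  have "ennreal (u s) = bellman p q w lam b (\<lambda>s. ennreal (u s)) s"
    using lfp_unfold[OF mono_bellman] U unfolding disc_value_def by metis
  also have "\<dots> = ennreal (real_bellman p q w lam b u s)"
    using bellman_ennreal u0 assms by simp
  finally show "u s = real_bellman p q w lam b u s"
    using u0 real_bellman_nonneg[of p q u w lam b s] assms by (simp add: ennreal_inj)
qed

text \<open>Serving pays off at age \<open>d\<close> exactly when \<open>u (Job (Suc d))\<close> exceeds a fixed level, so
  monotonicity in the age turns any solution of the Bellman equation into a threshold policy.\<close>

lemma monotone_bellman_solution_threshold:
  assumes q: "0 < q" "q \<le> 1" and p: "0 \<le> p" "p \<le> 1" and b: "0 < b"
    and w: "0 < w" and lam: "0 \<le> lam"
    and u0: "\<And>s. 0 \<le> u s" and bellman_eq: "\<And>s. u s = real_bellman p q w lam b u s"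
    and mono: "\<And>d. u (Job d) \<le> u (Job (Suc d))"
  obtains T where "\<And>s. u s = action_value p q w lam b u s (threshold_policy T s)"
proof -
  define L where "L = lam + b * q * (p * u (Job 0) + (1 - p) * u Empty)"
  have diff: "action_value p q w lam b u (Job d) 1 - action_value p q w lam b u (Job d) 0
                = L - b * q * u (Job (Suc d))" for d
    unfolding action_value_Job_diff L_def by (simp add: algebra_simps)
  have "w * real d \<le> u (Job d)" for d
  proof -
    have "cost w lam (Job d) c \<le> action_value p q w lam b u (Job d) c" for c
      by (rule cost_le_action_value) (use assms in auto)
    moreover have "w * real d \<le> cost w lam (Job d) c" for c unfolding cost_def using lam by simp
    ultimately have "w * real d \<le> action_value p q w lam b u (Job d) c" for c by (meson order_trans)
    then show ?thesis using bellman_eq[of "Job d"] unfolding real_bellman_def by (simp add: min_def)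
  qed
  then have "\<exists>d. L < b * q * u (Job (Suc d))"
  proof -
    assume low: "\<And>d. w * real d \<le> u (Job d)"
    have bqw: "0 < b * q * w" using b q w by simp
    obtain n where "L / (b * q * w) < real n" using reals_Archimedean2 by blast
    then have "L < b * q * w * real n" using bqw by (simp add: field_simps)
    also have "\<dots> \<le> b * q * u (Job (Suc n))"
      using low[of "Suc n"] b q w by (simp add: mult_left_mono order_trans[of _ "w * real (Suc n)"])
    finally show ?thesis by blast
  qed
  define T where "T = (LEAST d. L < b * q * u (Job (Suc d)))"
  have above: "L < b * q * u (Job (Suc d))" if "T \<le> d" for d
  proof -
    have "L < b * q * u (Job (Suc T))"
      unfolding T_def by (rule LeastI_ex) fact
    also have "\<dots> \<le> b * q * u (Job (Suc d))"
      using lift_Suc_mono_le[of "\<lambda>d. u (Job d)", OF mono] that b q by (simp add: mult_left_mono)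
    finally show ?thesis .
  qed
  have below: "\<not> L < b * q * u (Job (Suc d))" if "d < T" for d
    using that unfolding T_def by (rule not_less_Least)
  have "u s = action_value p q w lam b u s (threshold_policy T s)" for s
  proof (cases s)
    case (Job d)
    then show ?thesis
      using bellman_eq[of s] above[of d] below[of d] diff[of d]
      by (cases "T \<le> d") (simp_all add: real_bellman_def threshold_policy_def min_def)
  qed (use bellman_eq in \<open>simp add: real_bellman_def threshold_policy_def\<close>)
  then show ?thesis by (rule that)
qed

lemma policy_solution_eq_threshold_disc_value:
  assumes q: "0 < q" "q \<le> 1" and p: "0 < p" "p \<le> 1" and b: "0 < b" "b < 1"
    and w: "0 \<le> w" and lam: "0 \<le> lam"
    and u0: "\<And>s. 0 \<le> u s" and le: "\<And>s. u s \<le> threshold_disc_value p q w lam b T s"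
    and pol: "\<And>s. u s = action_value p q w lam b u s (threshold_policy T s)"
  shows "u s = threshold_disc_value p q w lam b T s"
proof -
  define V where "V = threshold_disc_value p q w lam b T"
  define D where "D s = V s - u s" for s
  obtain C B where CB: "0 \<le> B" "\<And>s. V s \<le> C + B * real (age s)"
    using threshold_disc_value_linear_bound[OF q p b w lam] unfolding V_def by metis
  have "D s = b * expect p q s (threshold_policy T s) D" for s
  proof -
    have "D s = action_value p q w lam b V s (threshold_policy T s) - action_value p q w lam b u s (threshold_policy T s)"
      unfolding D_def V_def using threshold_disc_value_policy_eq[OF q p b] pol by metis
    then show ?thesis
      unfolding action_value_def D_def by (simp add: right_diff_distrib[symmetric] expect_diff)
  qed
  moreover have "0 \<le> D s" "D s \<le> C + B * real (age s)" for s
    using le[of s] u0[of s] CB(2)[of s] unfolding D_def V_def by auto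
  ultimately have "D s = 0"
    using discounted_subsolution_zero[of p q b D B C] CB(1) p q b by (metis less_imp_le order_refl)
  then show ?thesis unfolding D_def V_def by simp
qed

lemma disc_value_eq_threshold:
  assumes q: "0 < q" "q \<le> 1" and p: "0 < p" "p \<le> 1" and b: "0 < b" "b < 1"
    and w: "0 < w" and lam: "0 \<le> lam"
  obtains T where "disc_value p q w lam b = (\<lambda>s. ennreal (threshold_disc_value p q w lam b T s))"
proof -
  obtain u where U: "disc_value p q w lam b = (\<lambda>s. ennreal (u s))" and u0: "\<And>s. 0 \<le> u s"
    and bellman_eq: "\<And>s. u s = real_bellman p q w lam b u s"
    using disc_value_real_fixpoint[OF q p b less_imp_le[OF w] lam] by metis
  have mono: "u (Job d) \<le> u (Job (Suc d))" for d
    using disc_value_mono_age[OF less_imp_le[OF w], of p q lam b d] u0 unfolding U by simp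
  obtain T where pol: "\<And>s. u s = action_value p q w lam b u s (threshold_policy T s)"
    using monotone_bellman_solution_threshold[OF q less_imp_le[OF p(1)] p(2) b(1) w lam u0 bellman_eq mono]
    by blast
  have "u s \<le> threshold_disc_value p q w lam b T s" for s
    using disc_value_le_threshold[OF q p b less_imp_le[OF w] lam, of s T]
      threshold_disc_value_nonneg[OF q p b less_imp_le[OF w] lam, of T s]
    unfolding U by simp
  then have "u s = threshold_disc_value p q w lam b T s" for s
    using policy_solution_eq_threshold_disc_value[OF q p b less_imp_le[OF w] lam u0 _ pol] by blast
  then have "disc_value p q w lam b = (\<lambda>s. ennreal (threshold_disc_value p q w lam b T s))"
    unfolding U by simp
  then show ?thesis by (rule that)
qed

lemma threshold_gain_minimal:
  assumes q: "0 < q" "q \<le> 1" and p: "0 < p" "p \<le> 1" and b: "0 < b" "b < 1"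
    and w: "0 \<le> w" and lam: "0 \<le> lam"
    and opt: "disc_value p q w lam b = (\<lambda>s. ennreal (threshold_disc_value p q w lam b T s))"
  shows "threshold_gain p q w lam b T \<le> threshold_gain p q w lam b T'"
proof -
  have "threshold_disc_value p q w lam b T Empty \<le> threshold_disc_value p q w lam b T' Empty"
    using disc_value_le_threshold[OF assms(1-8), of Empty T'] threshold_disc_value_nonneg[OF assms(1-8)]
    unfolding opt by simp
  then show ?thesis using b unfolding threshold_disc_value_Empty by (simp add: divide_le_cancel)
qed

lemma threshold_active_value_le:
  assumes q: "0 < q" "q \<le> 1" and p: "0 < p" "p \<le> 1" and b: "0 < b" "b < 1"
    and w: "0 \<le> w" and lam: "0 \<le> lam" and T: "1 \<le> T"
    and opt: "disc_value p q w lam b = (\<lambda>s. ennreal (threshold_disc_value p q w lam b T s))"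
  shows "b * q * active_value q w lam b (threshold_gain p q w lam b T) T \<le> lam"
proof -
  define V where "V = threshold_disc_value p q w lam b T"
  define d where "d = T - 1"
  have V0: "0 \<le> V s" for s unfolding V_def using threshold_disc_value_nonneg[OF assms(1-8)] by blast
  obtain u where U: "disc_value p q w lam b = (\<lambda>s. ennreal (u s))" and u0: "\<And>s. 0 \<le> u s"
    and bellman_eq: "\<And>s. u s = real_bellman p q w lam b u s"
    using disc_value_real_fixpoint[OF assms(1-8)] by metis
  have "u = V" using opt V0 u0 unfolding U V_def by (simp add: fun_eq_iff ennreal_inj)
  have dT: "d < T" "Suc d = T" using T unfolding d_def by auto
  have "action_value p q w lam b V (Job d) 0 = V (Job d)"
    using threshold_disc_value_policy_eq[OF q p b, of w lam T "Job d"] dT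
    unfolding V_def by (simp add: threshold_policy_def)
  also have "\<dots> = min (action_value p q w lam b V (Job d) 0) (action_value p q w lam b V (Job d) 1)"
    using bellman_eq[of "Job d"] \<open>u = V\<close> by (simp add: real_bellman_def)
  finally have "action_value p q w lam b V (Job d) 0 \<le> action_value p q w lam b V (Job d) 1"
    by (metis min.cobounded2)
  then have ineq: "0 \<le> lam + b * q * (p * V (Job 0) + (1 - p) * V Empty - V (Job T))"
    using action_value_Job_diff[of p q w lam b V d] dT by simp
  have restart: "p * V (Job 0) + (1 - p) * V Empty = threshold_gain p q w lam b T / (1 - b)"
    unfolding V_def by (rule threshold_disc_value_restart) (use assms in auto)
  have VT: "V (Job T) = active_value q w lam b (threshold_gain p q w lam b T) T
                        + threshold_gain p q w lam b T / (1 - b)"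
    unfolding V_def threshold_disc_value_Job threshold_value_def by simp
  show ?thesis using ineq[unfolded restart, unfolded VT] by (simp add: algebra_simps)
qed

lemma threshold_gain_0_le:
  assumes q: "0 < q" "q \<le> 1" and p: "0 < p" "p \<le> 1" and b: "0 < b" "b \<le> 1"
    and w: "0 \<le> w" and lam: "0 \<le> lam"
  shows "threshold_gain p q w lam b 0 \<le> lam + w / q"
proof -
  define c where "c = stop_rate q b"
  have c: "0 < c" "q \<le> c" "c \<le> 1"
    unfolding c_def using stop_rate_pos[of q b] stop_rate_ge[of q b] stop_rate_le_1[of q b] q b by auto
  define A where "A = lam / c + w * (b * (1 - q)) / c\<^sup>2"
  have A0: "0 \<le> A" unfolding A_def using c lam w q b by simp
  have D: "p / c \<le> 1 - p + p * (1 / c)" "0 < p / c" using p c by simp_all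
  have "threshold_gain p q w lam b 0 = p * A / (1 - p + p * (1 / c))"
    unfolding threshold_gain_def threshold_cost_def threshold_time_def A_def c_def by simp
  also have "\<dots> \<le> p * A / (p / c)"
    using D A0 p by (intro divide_left_mono mult_pos_pos) auto
  also have "\<dots> = lam + w * (b * (1 - q)) / c"
    unfolding A_def using p c by (simp add: field_simps power2_eq_square)
  also have "w * (b * (1 - q)) / c \<le> w / q"
  proof -
    have "w * (b * (1 - q)) \<le> w" using b q w by (simp add: mult_le_one mult_left_le)
    then have "w * (b * (1 - q)) / c \<le> w / c" using c by (simp add: divide_right_mono)
    also have "\<dots> \<le> w / q" using c q w by (simp add: divide_left_mono)
    finally show ?thesis .
  qed
  finally show ?thesis by simp
qed

text \<open>The bound is uniform in \<open>b \<in> (1/2, 1)\<close>: it keeps the candidate thresholds in a finite set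
  when \<open>b \<longrightarrow> 1\<close>.\<close>

lemma optimal_threshold_le:
  assumes q: "0 < q" "q \<le> 1" and p: "0 < p" "p \<le> 1" and b: "1/2 < b" "b < 1"
    and w: "0 < w" and lam: "0 \<le> lam"
    and minimal: "\<And>T'. threshold_gain p q w lam b T \<le> threshold_gain p q w lam b T'"
    and active: "1 \<le> T \<Longrightarrow> b * q * active_value q w lam b (threshold_gain p q w lam b T) T \<le> lam"
  shows "w * real T \<le> w / q + 2 * lam / q"
proof -
  define g where "g = threshold_gain p q w lam b T"
  define y where "y = w * real T + lam - g"
  have g: "g \<le> lam + w / q"
    unfolding g_def using minimal[of 0] threshold_gain_0_le[OF q p _ _ _ lam, of b w] w b by simp
  have bound: "y \<le> 2 * lam / q" if T: "1 \<le> T" and pos: "0 < y"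
  proof -
    define c where "c = stop_rate q b"
    have c: "0 < c" "c \<le> 1" unfolding c_def using stop_rate_pos[of q b] stop_rate_le_1[of q b] q b by auto
    have "y \<le> y / c" using c pos by (simp add: le_divide_eq)
    also have "\<dots> \<le> active_value q w lam b g T"
      unfolding active_value_def c_def[symmetric] y_def using w b q c by simp
    finally have qy: "q * y \<le> q * active_value q w lam b g T" using q by simp
    have "1/2 * (q * y) \<le> b * (q * y)" using b q pos by (intro mult_right_mono) auto
    also have "\<dots> \<le> b * (q * active_value q w lam b g T)"
      by (rule mult_left_mono[OF qy]) (use b in simp)
    finally have "q * y \<le> 2 * lam" using active[OF T] unfolding g_def by simp
    then show ?thesis using q by (simp add: le_divide_eq mult.commute)
  qed
  show ?thesis
  proof (cases "1 \<le> T \<and> 0 < y")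
    case True
    then show ?thesis using bound g unfolding y_def by auto
  next
    case False
    then have "T = 0 \<or> y \<le> 0" by auto
    moreover have "0 \<le> w / q" "0 \<le> 2 * lam / q" using w lam q by simp_all
    ultimately show ?thesis using g unfolding y_def by auto
  qed
qed

section \<open>Vanishing discount\<close>

definition threshold_rel_value :: "real \<Rightarrow> real \<Rightarrow> real \<Rightarrow> real \<Rightarrow> real \<Rightarrow> nat \<Rightarrow> nat \<Rightarrow> real" where
  "threshold_rel_value p q w lam b T d =
     threshold_value q w lam b (threshold_gain p q w lam b T) T d + threshold_gain p q w lam b T"

lemma threshold_disc_value_diff:
  assumes "b < 1"
  shows "threshold_disc_value p q w lam b T (Job d) - threshold_disc_value p q w lam b T Empty
           = threshold_rel_value p q w lam b T d"
proof -
  define g where "g = threshold_gain p q w lam b T"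
  have "g / (1 - b) - b * (g / (1 - b)) = (1 - b) * (g / (1 - b))"
    by (simp only: left_diff_distrib mult_1)
  also have "\<dots> = g" using assms by simp
  finally show ?thesis
    unfolding threshold_disc_value_Job threshold_disc_value_Empty threshold_rel_value_def g_def[symmetric]
    by simp
qed

lemma isCont_threshold_gain:
  assumes "0 < q" "q \<le> 1" "0 < p" "p \<le> 1"
  shows "isCont (\<lambda>b. threshold_gain p q w lam b T) 1"
proof -
  have "isCont (\<lambda>b. threshold_cost q w lam b T) 1" "isCont (\<lambda>b. threshold_time q b T) 1"
    unfolding threshold_cost_def threshold_time_def stop_rate_def
    using assms by (intro continuous_intros; simp)+
  then show ?thesis
    unfolding threshold_gain_def using assms gain_denom_pos[of q 1 p T]
    by (intro continuous_intros) auto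
qed

lemma isCont_threshold_rel_value:
  assumes "0 < q" "q \<le> 1" "0 < p" "p \<le> 1"
  shows "isCont (\<lambda>b. threshold_rel_value p q w lam b T d) 1"
proof -
  note gain = isCont_threshold_gain[OF assms]
  have active: "isCont (\<lambda>b. active_value q w lam b (threshold_gain p q w lam b T) k) 1" for k
    unfolding active_value_def stop_rate_def using assms by (intro continuous_intros gain) auto
  show ?thesis
    unfolding threshold_rel_value_def threshold_value_def
    by (cases "T \<le> d") (simp_all, (intro continuous_intros gain active)+)
qed

text \<open>\<open>completion_cost q w d\<close> is \<open>w\<close> times the mean age at completion of a job served from age
  \<open>d\<close> on.  For \<open>b = 1\<close> the gain of threshold \<open>T + 1\<close> is a proper convex combination of the gain of
  \<open>T\<close> and \<open>completion_cost q w T\<close>.\<close>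

definition completion_cost :: "real \<Rightarrow> real \<Rightarrow> nat \<Rightarrow> real" where
  "completion_cost q w d = w * (real d + 1 / q)"

definition gain_optimal :: "real \<Rightarrow> real \<Rightarrow> real \<Rightarrow> real \<Rightarrow> nat \<Rightarrow> bool" where
  "gain_optimal p q w lam T \<longleftrightarrow> (\<forall>T'. threshold_gain p q w lam 1 T \<le> threshold_gain p q w lam 1 T')"

lemma completion_cost_strict_mono: "0 < w \<Longrightarrow> d < d' \<Longrightarrow> completion_cost q w d < completion_cost q w d'"
  unfolding completion_cost_def by simp

lemma threshold_time_1: "threshold_time q 1 T = real T + 1 / q"
  unfolding threshold_time_def stop_rate_def by simp

lemma threshold_cost_1_Suc:
  "0 < q \<Longrightarrow> threshold_cost q w lam 1 (Suc T) = threshold_cost q w lam 1 T + completion_cost q w T"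
  unfolding threshold_cost_def completion_cost_def stop_rate_def by (simp add: add_divide_distrib algebra_simps)

lemma threshold_gain_1_Suc:
  fixes T :: nat
  assumes q: "0 < q" "q \<le> 1" and p: "0 < p" "p \<le> 1"
  shows "(1 - p + p * threshold_time q 1 T + p) * threshold_gain p q w lam 1 (Suc T)
           = (1 - p + p * threshold_time q 1 T) * threshold_gain p q w lam 1 T + p * completion_cost q w T"
proof -
  define A where "A = threshold_cost q w lam 1 T"
  define D where "D = 1 - p + p * threshold_time q 1 T"
  have D: "0 < D" unfolding D_def using gain_denom_pos[of q 1 p T] q p by simp
  have "1 - p + p * threshold_time q 1 (Suc T) = D + p"
    unfolding D_def threshold_time_1 by (simp add: algebra_simps)
  then have "threshold_gain p q w lam 1 (Suc T) = p * (A + completion_cost q w T) / (D + p)"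
    unfolding threshold_gain_def threshold_cost_1_Suc[OF q(1)] A_def by simp
  moreover have "threshold_gain p q w lam 1 T = p * A / D"
    unfolding threshold_gain_def A_def D_def ..
  ultimately show ?thesis
    unfolding D_def[symmetric] using D p by (simp add: field_simps)
qed

lemma threshold_gain_1_Suc_compare:
  fixes w lam :: real and T :: nat
  assumes q: "0 < q" "q \<le> 1" and p: "0 < p" "p \<le> 1"
  defines "g \<equiv> threshold_gain p q w lam 1" and "a \<equiv> completion_cost q w T"
  shows "g T \<le> g (Suc T) \<longleftrightarrow> g T \<le> a"
    and "g (Suc T) \<le> g T \<longleftrightarrow> a \<le> g T"
    and "a \<le> g (Suc T) \<longleftrightarrow> a \<le> g T"
proof -
  define D where "D = 1 - p + p * threshold_time q 1 T"
  have D: "0 < D" unfolding D_def using gain_denom_pos[of q 1 p T] q p by simp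
  have eq: "(D + p) * g (Suc T) = D * g T + p * a"
    unfolding D_def g_def a_def by (rule threshold_gain_1_Suc[OF q p])
  have cancel: "x \<le> y \<longleftrightarrow> (D + p) * x \<le> (D + p) * y" for x y using D p by simp
  show "g T \<le> g (Suc T) \<longleftrightarrow> g T \<le> a"
    unfolding cancel[of "g T" "g (Suc T)"] eq using p by (simp add: algebra_simps)
  show "g (Suc T) \<le> g T \<longleftrightarrow> a \<le> g T"
    unfolding cancel[of "g (Suc T)" "g T"] eq using p by (simp add: algebra_simps)
  show "a \<le> g (Suc T) \<longleftrightarrow> a \<le> g T"
    unfolding cancel[of a "g (Suc T)"] eq using D by (simp add: algebra_simps)
qed

lemma gain_optimal_le_completion_cost:
  assumes "0 < q" "q \<le> 1" "0 < p" "p \<le> 1" "gain_optimal p q w lam T"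
  shows "threshold_gain p q w lam 1 T \<le> completion_cost q w T"
  using assms threshold_gain_1_Suc_compare(1)[OF assms(1-4), where w=w and lam=lam and T=T] unfolding gain_optimal_def by blast

lemma completion_cost_le_gain_optimal:
  assumes "0 < q" "q \<le> 1" "0 < p" "p \<le> 1" "gain_optimal p q w lam (Suc T)"
  shows "completion_cost q w T \<le> threshold_gain p q w lam 1 (Suc T)"
  using assms threshold_gain_1_Suc_compare(2,3)[OF assms(1-4), where w=w and lam=lam and T=T] unfolding gain_optimal_def by blast

text \<open>Two gain optimal thresholds differ by at most one, and then the threshold \<open>T\<close> is tied with
  \<open>T + 1\<close> because serving at age \<open>T\<close> costs exactly the gain; either way they have the same
  relative value.\<close>

lemma threshold_value_1_tie:
  assumes q: "0 < q" and g: "g = completion_cost q w T"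
  shows "threshold_value q w lam 1 g (Suc T) d = threshold_value q w lam 1 g T d"
proof (cases "d \<le> T")
  case True
  have active: "active_value q w lam 1 g (Suc T) = active_value q w lam 1 g T + w / q"
    unfolding active_value_def stop_rate_def using q by (simp add: field_simps)
  have "threshold_value q w lam 1 g (Suc T) d
      = (\<Sum>k<Suc (T - d). w * real (d + k) - g) + active_value q w lam 1 g (Suc T)"
    using threshold_value_below[of d "Suc T" q w lam 1 g] True by (simp add: Suc_diff_le)
  also have "\<dots> = (\<Sum>k<T - d. w * real (d + k) - g) + active_value q w lam 1 g T + (w * real T - g + w / q)"
    using True unfolding active by simp
  also have "w * real T - g + w / q = 0" unfolding g completion_cost_def by (simp add: algebra_simps)
  also have "(\<Sum>k<T - d. w * real (d + k) - g) + active_value q w lam 1 g T + 0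
      = threshold_value q w lam 1 g T d"
    using threshold_value_below[of d T q w lam 1 g] True by simp
  finally show ?thesis .
qed (simp add: threshold_value_def)

lemma gain_optimal_rel_value_eq:
  assumes q: "0 < q" "q \<le> 1" and p: "0 < p" "p \<le> 1" and w: "0 < w"
    and opt: "gain_optimal p q w lam T1" "gain_optimal p q w lam T2"
  shows "threshold_rel_value p q w lam 1 T1 d = threshold_rel_value p q w lam 1 T2 d"
proof -
  have ordered: "threshold_rel_value p q w lam 1 S1 d = threshold_rel_value p q w lam 1 S2 d"
    if opt: "gain_optimal p q w lam S1" "gain_optimal p q w lam S2" and less: "S1 < S2" for S1 S2
  proof -
    have eq: "threshold_gain p q w lam 1 S1 = threshold_gain p q w lam 1 S2"
      using opt unfolding gain_optimal_def by (meson order_antisym)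
    have le: "threshold_gain p q w lam 1 S1 \<le> completion_cost q w S1"
      by (rule gain_optimal_le_completion_cost[OF q p opt(1)])
    have ge: "completion_cost q w (S2 - 1) \<le> threshold_gain p q w lam 1 S2"
      using completion_cost_le_gain_optimal[OF q p, of w lam "S2 - 1"] opt(2) less by simp
    have "\<not> S1 < S2 - 1" using completion_cost_strict_mono[OF w, of S1 "S2 - 1" q] le ge eq by linarith
    then have S2: "S2 = Suc S1" using less by simp
    have "threshold_gain p q w lam 1 S1 = completion_cost q w S1" using le ge eq S2 by simp
    then show ?thesis
      unfolding threshold_rel_value_def S2 eq[unfolded S2, symmetric]
      using threshold_value_1_tie[OF q(1)] by simp
  qed
  show ?thesis
  proof (cases T1 T2 rule: linorder_cases)
    case less
    then show ?thesis by (rule ordered[OF opt])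
  next
    case greater
    then show ?thesis using ordered[OF opt(2,1)] by simp
  qed simp
qed

lemma gain_optimal_threshold_value_le_iff:
  assumes q: "0 < q" "q \<le> 1" and p: "0 < p" "p \<le> 1" and w: "0 < w"
    and opt: "gain_optimal p q w lam T"
  defines "g \<equiv> threshold_gain p q w lam 1 T"
  shows "q * threshold_value q w lam 1 g T (Suc d) \<le> lam \<longleftrightarrow> completion_cost q w d \<le> g"
proof -
  have q_active: "q * active_value q w lam 1 g k = completion_cost q w (k - 1) + lam - g" if "1 \<le> k" for k
  proof -
    have "q * active_value q w lam 1 g k = w * real k + lam - g + w * (1 - q) / q"
      unfolding active_value_def stop_rate_def using q by (simp add: field_simps power2_eq_square)
    also have "\<dots> = completion_cost q w (k - 1) + lam - g"
      unfolding completion_cost_def using that q by (simp add: of_nat_diff field_simps)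
    finally show ?thesis .
  qed
  show ?thesis
  proof (cases "T \<le> Suc d")
    case True
    then show ?thesis unfolding threshold_value_def using q_active[of "Suc d"] by simp
  next
    case False
    then have T: "1 \<le> T" by simp
    have ge: "completion_cost q w (T - 1) \<le> g"
      using completion_cost_le_gain_optimal[OF q p, of w lam "T - 1"] opt T unfolding g_def by simp
    moreover have "d < T - 1" using False by simp
    ultimately have "completion_cost q w d \<le> g"
      using completion_cost_strict_mono[OF w, where q=q] by (meson less_imp_le order_trans)
    moreover have terms: "w * real (Suc d + k) - g \<le> 0" if "k < T - Suc d" for k
    proof -
      have "w * real (Suc d + k) \<le> w * real (T - 1)" using that w by (intro mult_left_mono) auto
      also have "\<dots> \<le> completion_cost q w (T - 1)" unfolding completion_cost_def using w q by simp
      finally show ?thesis using ge by simp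
    qed
    have "(\<Sum>k<T - Suc d. 1 ^ k * (w * real (Suc d + k) - g)) \<le> 0"
      using terms by (intro sum_nonpos) simp
    then have "threshold_value q w lam 1 g T (Suc d) \<le> active_value q w lam 1 g T"
      using threshold_value_below[of "Suc d" T q w lam 1 g] False by simp
    then have "q * threshold_value q w lam 1 g T (Suc d) \<le> q * active_value q w lam 1 g T"
      using q by (simp add: mult_left_mono)
    then have "q * threshold_value q w lam 1 g T (Suc d) \<le> lam"
      using q_active[OF T] ge by linarith
    ultimately show ?thesis by simp
  qed
qed

lemma threshold_cost_1_ge:
  assumes q: "0 < q" "q \<le> 1" and w: "0 \<le> w" and lam: "0 \<le> lam"
  shows "w * real T * (real T + 1) / 2 + lam / q \<le> threshold_cost q w lam 1 T"
proof (induction T)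
  case 0
  have "0 \<le> w * (1 - q) / q\<^sup>2" using q w by simp
  then show ?case unfolding threshold_cost_def stop_rate_def by simp
next
  case (Suc T)
  have "w \<le> w / q" using q w by (simp add: le_divide_eq mult_left_le)
  then have "w * real (Suc T) * (real (Suc T) + 1) / 2 + lam / q
               \<le> w * real T * (real T + 1) / 2 + lam / q + completion_cost q w T"
    unfolding completion_cost_def by (simp add: algebra_simps add_divide_distrib)
  then show ?case using Suc.IH unfolding threshold_cost_1_Suc[OF q(1)] by simp
qed

lemma threshold_gain_1_ge:
  assumes q: "0 < q" "q \<le> 1" and p: "0 < p" "p \<le> 1" and w: "0 \<le> w" and lam: "0 \<le> lam"
  shows "p * (w * real T * (real T + 1) / 2 + lam / q) \<le> threshold_gain p q w lam 1 T * (real T + 1 / q)"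
proof -
  define A where "A = threshold_cost q w lam 1 T"
  define D where "D = 1 - p + p * (real T + 1 / q)"
  have D: "0 < D" unfolding D_def using gain_denom_pos[of q 1 p T] q p unfolding threshold_time_1 by simp
  have "1 \<le> 1 / q" using q by (simp add: le_divide_eq)
  then have "0 \<le> (1 - p) * (1 / q - 1) + (1 - p) * real T" using p by simp
  moreover have "real T + 1 / q - D = (1 - p) * (1 / q - 1) + (1 - p) * real T"
    unfolding D_def using q by (simp add: field_simps)
  ultimately have "D \<le> real T + 1 / q" by linarith
  moreover have "0 \<le> A" unfolding A_def using threshold_cost_nonneg[of q 1 w lam T] q w lam by simp
  ultimately have "p * A / D * D \<le> p * A / D * (real T + 1 / q)"
    using D p by (intro mult_left_mono) auto
  then have "p * A \<le> p * A / D * (real T + 1 / q)" using D by simp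
  moreover have "p * (w * real T * (real T + 1) / 2 + lam / q) \<le> p * A"
    unfolding A_def using threshold_cost_1_ge[OF q w lam, of T] p by (intro mult_left_mono) auto
  moreover have "threshold_gain p q w lam 1 T = p * A / D"
    unfolding threshold_gain_def A_def D_def threshold_time_1 ..
  ultimately show ?thesis by (metis order_trans)
qed

lemma threshold_gain_1_ge_linear:
  assumes q: "0 < q" "q \<le> 1" and p: "0 < p" "p \<le> 1" and w: "0 \<le> w" and lam: "0 \<le> lam"
  shows "p * q * w * real T / 2 \<le> threshold_gain p q w lam 1 T"
proof -
  have "p * q * w * real T / 2 * (real T + 1 / q) = p * w * real T * (q * real T + 1) / 2"
    using q by (simp add: field_simps)
  also have "\<dots> \<le> p * w * real T * (real T + 1) / 2"
    using q p w by (intro divide_right_mono mult_left_mono) (auto simp: mult_left_le_one_le)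
  also have "\<dots> \<le> p * (w * real T * (real T + 1) / 2 + lam / q)"
    using p q lam by (simp add: algebra_simps)
  also have "\<dots> \<le> threshold_gain p q w lam 1 T * (real T + 1 / q)"
    by (rule threshold_gain_1_ge[OF q p w lam])
  finally show ?thesis using q by (simp add: add_nonneg_pos)
qed

lemma gain_optimal_exists:
  assumes q: "0 < q" "q \<le> 1" and p: "0 < p" "p \<le> 1" and w: "0 < w" and lam: "0 \<le> lam"
  obtains T where "gain_optimal p q w lam T"
proof -
  define g where "g = threshold_gain p q w lam 1"
  define M where "M = nat \<lceil>2 * g 0 / (p * q * w)\<rceil>"
  have pqw: "0 < p * q * w" using p q w by simp
  have large: "g 0 \<le> g T" if "M \<le> T" for T
  proof -
    have "2 * g 0 / (p * q * w) \<le> real T" using that unfolding M_def by linarith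
    then have "2 * g 0 \<le> p * q * w * real T" using pqw by (simp add: field_simps)
    then show ?thesis
      using threshold_gain_1_ge_linear[OF q p less_imp_le[OF w] lam, of T] unfolding g_def by simp
  qed
  have "Min (g ` {..M}) \<in> g ` {..M}" by (intro Min_in) auto
  then obtain T where T: "T \<in> {..M}" "g T = Min (g ` {..M})" by (metis imageE)
  have "g T \<le> g T'" for T'
  proof (cases "T' \<le> M")
    case True
    then show ?thesis using T by (simp add: Min_le)
  next
    case False
    have "g T \<le> g 0" using T by (simp add: Min_le)
    then show ?thesis using large[of T'] False by simp
  qed
  then show ?thesis using that unfolding gain_optimal_def g_def by blast
qed

lemma tendsto_finite_cover:
  fixes f :: "'i \<Rightarrow> 'a \<Rightarrow> 'b::metric_space"
  assumes "finite I" and "\<And>i. i \<in> I \<Longrightarrow> (f i \<longlongrightarrow> L) F"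
    and "eventually (\<lambda>x. \<exists>i\<in>I. g x = f i x) F"
  shows "(g \<longlongrightarrow> L) F"
proof (rule tendstoI)
  fix e :: real assume "0 < e"
  then have "\<forall>i\<in>I. eventually (\<lambda>x. dist (f i x) L < e) F" using assms(2) tendstoD by blast
  then have "eventually (\<lambda>x. \<forall>i\<in>I. dist (f i x) L < e) F" by (rule eventually_ball_finite[OF assms(1)])
  with assms(3) show "eventually (\<lambda>x. dist (g x) L < e) F"
    by eventually_elim auto
qed

lemma eventually_minimizer_gain_optimal:
  assumes q: "0 < q" "q \<le> 1" and p: "0 < p" "p \<le> 1" and S: "finite S"
    and opt: "gain_optimal p q w lam T0"
  shows "eventually (\<lambda>b. \<forall>T\<in>S. (\<forall>T'. threshold_gain p q w lam b T \<le> threshold_gain p q w lam b T')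
                           \<longrightarrow> gain_optimal p q w lam T) (at_left 1)"
proof -
  have "eventually (\<lambda>b. threshold_gain p q w lam b T0 < threshold_gain p q w lam b T) (at_left 1)"
    if "\<not> gain_optimal p q w lam T" for T
  proof -
    have lt: "threshold_gain p q w lam 1 T0 < threshold_gain p q w lam 1 T"
      using that opt unfolding gain_optimal_def by (meson le_less_trans not_le)
    have lim: "((\<lambda>b. threshold_gain p q w lam b T - threshold_gain p q w lam b T0)
        \<longlongrightarrow> threshold_gain p q w lam 1 T - threshold_gain p q w lam 1 T0) (at_left 1)"
      using isCont_diff[OF isCont_threshold_gain[OF q p] isCont_threshold_gain[OF q p]]
      by (rule Lim_at_imp_Lim_at_within[OF isContD])
    have "eventually (\<lambda>b. 0 < threshold_gain p q w lam b T - threshold_gain p q w lam b T0) (at_left 1)"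
      by (rule order_tendstoD(1)[OF lim]) (use lt in simp)
    then show ?thesis by (rule eventually_mono) simp
  qed
  then have "eventually (\<lambda>b. \<not> gain_optimal p q w lam T
               \<longrightarrow> threshold_gain p q w lam b T0 < threshold_gain p q w lam b T) (at_left 1)" for T
    by (cases "gain_optimal p q w lam T") simp_all
  then have "eventually (\<lambda>b. \<forall>T\<in>S. \<not> gain_optimal p q w lam T
               \<longrightarrow> threshold_gain p q w lam b T0 < threshold_gain p q w lam b T) (at_left 1)"
    by (intro eventually_ball_finite[OF S] ballI)
  then show ?thesis
  proof (rule eventually_mono)
    fix b
    assume "\<forall>T\<in>S. \<not> gain_optimal p q w lam T \<longrightarrow> threshold_gain p q w lam b T0 < threshold_gain p q w lam b T"
    then show "\<forall>T\<in>S. (\<forall>T'. threshold_gain p q w lam b T \<le> threshold_gain p q w lam b T')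
                 \<longrightarrow> gain_optimal p q w lam T"
      using not_le by blast
  qed
qed

lemma rel_value_Empty: "rel_value p q w lam Empty = 0"
proof -
  have "((\<lambda>b::real. 0::real) \<longlongrightarrow> 0) (at_left 1)" by simp
  then show ?thesis unfolding rel_value_def by (simp add: tendsto_Lim[OF trivial_limit_at_left_real])
qed

lemma rel_value_Job:
  assumes q: "0 < q" "q \<le> 1" and p: "0 < p" "p \<le> 1" and w: "0 < w" and lam: "0 \<le> lam"
    and opt: "gain_optimal p q w lam T0"
  shows "rel_value p q w lam (Job d) = threshold_rel_value p q w lam 1 T0 d"
proof -
  define K where "K = w / q + 2 * lam / q"
  define S where "S = {T. w * real T \<le> K}"
  have "S \<subseteq> {..nat \<lceil>K / w\<rceil>}"
  proof
    fix T assume "T \<in> S"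
    then have "real T \<le> K / w" unfolding S_def using w by (simp add: le_divide_eq mult.commute)
    then show "T \<in> {..nat \<lceil>K / w\<rceil>}" by (simp add: le_nat_iff) linarith
  qed
  then have S: "finite S" by (rule finite_subset) simp
  have "eventually (\<lambda>b. 1/2 < b \<and> b < 1) (at_left (1::real))"
    by (rule eventually_at_leftI[of "1/2"]) auto
  moreover note eventually_minimizer_gain_optimal[OF q p S opt]
  ultimately have ev: "eventually (\<lambda>b. \<exists>T\<in>S \<inter> {T. gain_optimal p q w lam T}.
      enn2real (disc_value p q w lam b (Job d)) - enn2real (disc_value p q w lam b Empty)
        = threshold_rel_value p q w lam b T d) (at_left 1)"
  proof eventually_elim
    case (elim b)
    then have b: "0 < b" "b < 1" "1/2 < b" by auto
    obtain T where T: "disc_value p q w lam b = (\<lambda>s. ennreal (threshold_disc_value p q w lam b T s))"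
      using disc_value_eq_threshold[OF q p b(1,2) w lam] by blast
    have minimal: "threshold_gain p q w lam b T \<le> threshold_gain p q w lam b T'" for T'
      using threshold_gain_minimal[OF q p b(1,2) less_imp_le[OF w] lam T] .
    have "1 \<le> T \<Longrightarrow> b * q * active_value q w lam b (threshold_gain p q w lam b T) T \<le> lam"
      using threshold_active_value_le[OF q p b(1,2) less_imp_le[OF w] lam _ T] .
    then have "T \<in> S" unfolding S_def K_def using optimal_threshold_le[OF q p b(3,2) w lam minimal] by simp
    moreover have "gain_optimal p q w lam T" if "T \<in> S" using elim that minimal by auto
    ultimately have mem: "T \<in> S \<inter> {T. gain_optimal p q w lam T}" by simp
    have "enn2real (disc_value p q w lam b s) = threshold_disc_value p q w lam b T s" for s
      using threshold_disc_value_nonneg[OF q p b(1,2) less_imp_le[OF w] lam, of T s] unfolding T by simp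
    then have "enn2real (disc_value p q w lam b (Job d)) - enn2real (disc_value p q w lam b Empty)
        = threshold_rel_value p q w lam b T d"
      using threshold_disc_value_diff[OF b(2)] by simp
    with mem show ?case by blast
  qed
  have lim: "((\<lambda>b. threshold_rel_value p q w lam b T d) \<longlongrightarrow> threshold_rel_value p q w lam 1 T0 d) (at_left 1)"
    if "T \<in> S \<inter> {T. gain_optimal p q w lam T}" for T
  proof -
    have eq: "threshold_rel_value p q w lam 1 T d = threshold_rel_value p q w lam 1 T0 d"
      using gain_optimal_rel_value_eq[OF q p w _ opt] that by simp
    show ?thesis
      unfolding eq[symmetric]
      by (rule Lim_at_imp_Lim_at_within[OF isContD[OF isCont_threshold_rel_value[OF q p]]])
  qed
  have "((\<lambda>b. enn2real (disc_value p q w lam b (Job d)) - enn2real (disc_value p q w lam b Empty))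
      \<longlongrightarrow> threshold_rel_value p q w lam 1 T0 d) (at_left 1)"
    by (rule tendsto_finite_cover[where f = "\<lambda>T b. threshold_rel_value p q w lam b T d", OF _ lim ev])
       (use S in simp_all)
  then show ?thesis unfolding rel_value_def by (rule tendsto_Lim[OF trivial_limit_at_left_real])
qed

section \<open>Indexability\<close>

lemma passive_set_Job_iff:
  assumes q: "0 < q" "q \<le> 1" and p: "0 < p" "p \<le> 1" and w: "0 < w" and lam: "0 \<le> lam"
    and opt: "gain_optimal p q w lam T"
  shows "Job d \<in> passive_set p q w lam \<longleftrightarrow> completion_cost q w d \<le> threshold_gain p q w lam 1 T"
proof -
  define h where "h = rel_value p q w lam"
  define g where "g = threshold_gain p q w lam 1 T"
  define u where "u = threshold_value q w lam 1 g T"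
  have hJ: "h (Job k) = u k + g" for k
    unfolding h_def rel_value_Job[OF q p w lam opt] threshold_rel_value_def u_def g_def ..
  have hE: "h Empty = 0" unfolding h_def by (rule rel_value_Empty)
  have consistent: "(1 - p) * g = p * u 0"
    unfolding g_def u_def using threshold_gain_consistent[of q 1 p w lam T] q p by simp
  have "Vbar p q w (Job d) 0 lam \<le> Vbar p q w (Job d) 1 lam \<longleftrightarrow>
      w * real d + h (Job (Suc d))
        \<le> w * real d + lam + (q * p * h (Job 0) + q * (1 - p) * h Empty + (1 - q) * h (Job (Suc d)))"
    unfolding Vbar_def h_def[symmetric] by (simp add: cost_def expect_Job_passive expect_Job_active)
  also have "\<dots> \<longleftrightarrow> q * u (Suc d) \<le> lam + q * (p * u 0 - (1 - p) * g)"
    unfolding hE hJ by (simp add: algebra_simps)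
  also have "\<dots> \<longleftrightarrow> q * u (Suc d) \<le> lam" using consistent by simp
  also have "\<dots> \<longleftrightarrow> completion_cost q w d \<le> g"
    unfolding u_def g_def by (rule gain_optimal_threshold_value_le_iff[OF q p w opt])
  finally show ?thesis unfolding passive_set_def g_def by simp
qed

lemma threshold_gain_mono_lam:
  assumes q: "0 < q" "q \<le> 1" and p: "0 < p" "p \<le> 1" and "lam1 \<le> lam2"
  shows "threshold_gain p q w lam1 1 T \<le> threshold_gain p q w lam2 1 T"
proof -
  have "threshold_cost q w lam1 1 T \<le> threshold_cost q w lam2 1 T"
    unfolding threshold_cost_def stop_rate_def using assms by (simp add: divide_right_mono)
  then show ?thesis
    unfolding threshold_gain_def using gain_denom_pos[of q 1 p T] q p
    by (intro divide_right_mono mult_left_mono) auto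
qed

lemma threshold_gain_unbounded:
  assumes q: "0 < q" "q \<le> 1" and p: "0 < p" "p \<le> 1" and w: "0 < w" and X: "0 \<le> X"
  obtains lam where "0 \<le> lam" "\<And>T. X \<le> threshold_gain p q w lam 1 T"
proof
  define lam where "lam = X / p + q * X\<^sup>2 / (2 * p\<^sup>2 * w)"
  show lam0: "0 \<le> lam" unfolding lam_def using X p q w by simp
  fix T
  have "X * real T \<le> p * w * (real T)\<^sup>2 / 2 + X\<^sup>2 / (2 * p * w)"
  proof -
    have "0 \<le> (p * w * real T - X)\<^sup>2 / (2 * p * w)" using p w by simp
    also have "\<dots> = p * w * (real T)\<^sup>2 / 2 + X\<^sup>2 / (2 * p * w) - X * real T"
      using p w by (simp add: field_simps power2_eq_square)
    finally show ?thesis by simp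
  qed
  moreover have "p * w * (real T)\<^sup>2 / 2 \<le> p * (w * real T * (real T + 1) / 2)"
    using p w by (simp add: power2_eq_square algebra_simps)
  moreover have "p * (lam / q) = X / q + X\<^sup>2 / (2 * p * w)"
    unfolding lam_def using p q w by (simp add: field_simps power2_eq_square)
  moreover have "X * (real T + 1 / q) = X * real T + X / q"
    "p * (w * real T * (real T + 1) / 2 + lam / q) = p * (w * real T * (real T + 1) / 2) + p * (lam / q)"
    by (simp_all add: algebra_simps)
  ultimately have "X * (real T + 1 / q) \<le> p * (w * real T * (real T + 1) / 2 + lam / q)"
    by linarith
  also have "\<dots> \<le> threshold_gain p q w lam 1 T * (real T + 1 / q)"
    by (rule threshold_gain_1_ge[OF q p less_imp_le[OF w] lam0])
  finally show "X \<le> threshold_gain p q w lam 1 T"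
    using q by (simp add: add_nonneg_pos)
qed

lemma user_indexable_geometric:
  assumes q: "0 < q" "q \<le> 1" and p: "0 < p" "p \<le> 1" and w: "0 < w"
  shows "user_indexable p q w"
  unfolding user_indexable_def
proof (intro conjI allI impI)
  fix lam1 lam2 :: real assume lam1: "0 \<le> lam1" and le: "lam1 \<le> lam2"
  then have lam2: "0 \<le> lam2" by simp
  obtain T1 where T1: "gain_optimal p q w lam1 T1" using gain_optimal_exists[OF q p w lam1] .
  obtain T2 where T2: "gain_optimal p q w lam2 T2" using gain_optimal_exists[OF q p w lam2] .
  have gain_le: "threshold_gain p q w lam1 1 T1 \<le> threshold_gain p q w lam2 1 T2"
    using T1 threshold_gain_mono_lam[OF q p le, of w T2] unfolding gain_optimal_def by (meson order_trans)
  show "passive_set p q w lam1 \<subseteq> passive_set p q w lam2"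
  proof
    fix s assume s: "s \<in> passive_set p q w lam1"
    show "s \<in> passive_set p q w lam2"
    proof (cases s)
      case Empty
      then show ?thesis unfolding passive_set_def by simp
    next
      case (Job d)
      then have "completion_cost q w d \<le> threshold_gain p q w lam1 1 T1"
        using s passive_set_Job_iff[OF q p w lam1 T1] by simp
      then show ?thesis
        unfolding Job passive_set_Job_iff[OF q p w lam2 T2] using gain_le by simp
    qed
  qed
next
  have "Job d \<in> (\<Union>lam\<in>{0..}. passive_set p q w lam)" for d
  proof -
    obtain lam where lam: "0 \<le> lam" "\<And>T. completion_cost q w d \<le> threshold_gain p q w lam 1 T"
      using threshold_gain_unbounded[OF q p w, of "completion_cost q w d"] q w
      unfolding completion_cost_def by auto
    obtain T where "gain_optimal p q w lam T" using gain_optimal_exists[OF q p w lam(1)] .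
    then show ?thesis using passive_set_Job_iff[OF q p w lam(1)] lam by auto
  qed
  moreover have "Empty \<in> passive_set p q w 0" unfolding passive_set_def by simp
  ultimately have "s \<in> (\<Union>lam\<in>{0..}. passive_set p q w lam)" for s by (cases s) auto
  then show "(\<Union>lam\<in>{0..}. passive_set p q w lam) = UNIV" by blast
qed

theorem theorem1:
  fixes N :: nat and M :: "nat \<Rightarrow> 'u set"
    and p :: "nat \<Rightarrow> 'u \<Rightarrow> real" and q :: "nat \<Rightarrow> real" and w :: "nat \<Rightarrow> 'u \<Rightarrow> real"
  assumes p_pos: "\<And>i j. i \<in> {1..N} \<Longrightarrow> j \<in> M i \<Longrightarrow> 0 < p i j \<and> p i j \<le> 1"
    and q_prob: "\<And>i. i \<in> {1..N} \<Longrightarrow> 0 < q i \<and> q i \<le> 1"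
    and w_pos: "\<And>i j. i \<in> {1..N} \<Longrightarrow> j \<in> M i \<Longrightarrow> 0 < w i j"
  shows "problem_indexable N M p q w"
  unfolding problem_indexable_def
  using user_indexable_geometric q_prob p_pos w_pos by blast

end
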